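(* For any symmetric caching scheme with $K$ users, cache fraction $\frac{M}{N}$ and subpacketization $F$, on a system with $N\ge K(1-\frac{M}{N})$ files, the optimal rate $R^*$ satisfies $$R^*F\ge (K+F)\Big(1-\frac{M}{N}\Big)-1.$$
   Context: Coded caching setup: a server holds $N$ files, each consisting of $F$ subfiles that are independent and uniform over a finite abelian group (each of unit entropy), connected by an error-free broadcast link to $K$ users each able to cache $M$ files; $FM/N$ is an integer. Symmetric caching: each user caches, for each subfile index $f$, the $f$-th subfile of either all files or none, and caches exactly $FM/N$ indices. Equivalently, the caching is described by a bipartite graph with $K$ left (user) vertices and $F$ right (subfile) vertices in which every user has degree $D=F(1-M/N)$, with user $k$ adjacent to $f$ iff it does not cache index $f$. A rate $R$ is achievable if there exist such a symmetric caching and a (possibly nonlinear) delivery scheme which, for every demand vector (each user demanding one file), broadcasts a message of total size $RF$ subfile units allowing each user to recover its demanded file; $R^*$ is the infimum of achievable rates for the given $K,F,M/N$. *)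

theory Defs
  imports Main Complex_Main
begin

text \<open>Indices: users k < K, files n < N, subfile indices f < F.
  A library is an array W n f of subfiles, each an element of the finite
  abelian group 'g (unit entropy = log |'g|); entries outside the range are 0.\<close>

definition library :: "nat \<Rightarrow> nat \<Rightarrow> (nat \<Rightarrow> nat \<Rightarrow> 'g::{finite,ab_group_add}) set" where
  "library N F = {W. \<forall>n f. (N \<le> n \<or> F \<le> f) \<longrightarrow> W n f = 0}"

text \<open>Symmetric caching: user k caches, for every f in Z k, the f-th subfile of
  all files; it caches exactly F*M/N indices.\<close>

definition symmetric_caching :: "nat \<Rightarrow> nat \<Rightarrow> nat \<Rightarrow> real \<Rightarrow> (nat \<Rightarrow> nat set) \<Rightarrow> bool" where
  "symmetric_caching K N F M Z \<longleftrightarrow>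
     (\<forall>k<K. Z k \<subseteq> {..<F} \<and> real (card (Z k)) = real F * M / real N)"

definition cache_content :: "nat \<Rightarrow> (nat \<Rightarrow> nat set) \<Rightarrow> nat \<Rightarrow>
     (nat \<Rightarrow> nat \<Rightarrow> 'g::{finite,ab_group_add}) \<Rightarrow> (nat \<Rightarrow> nat \<Rightarrow> 'g)" where
  "cache_content N Z k W = (\<lambda>n f. if n < N \<and> f \<in> Z k then W n f else 0)"

text \<open>Rate R is achievable: there is a symmetric caching and a (possibly nonlinear)
  delivery scheme which, for every demand vector d, broadcasts a message taking at most
  |'g| powr (R F) values (i.e. of size R F subfile units) from which every user k,
  using its cache contents, recovers all subfiles of file d k.\<close>

definition achievable :: "'g::{finite,ab_group_add} itself \<Rightarrow> nat \<Rightarrow> nat \<Rightarrow> nat \<Rightarrow> real \<Rightarrow> real \<Rightarrow> bool" where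
  "achievable G K N F M R \<longleftrightarrow>
     (\<exists>Z (enc :: (nat \<Rightarrow> nat) \<Rightarrow> (nat \<Rightarrow> nat \<Rightarrow> 'g) \<Rightarrow> nat)
        (dec :: (nat \<Rightarrow> nat) \<Rightarrow> nat \<Rightarrow> nat \<Rightarrow> (nat \<Rightarrow> nat \<Rightarrow> 'g) \<Rightarrow> nat \<Rightarrow> 'g).
        symmetric_caching K N F M Z \<and>
        (\<forall>d. (\<forall>k<K. d k < N) \<longrightarrow>
            real (card (enc d ` library N F)) \<le> real (card (UNIV :: 'g set)) powr (R * real F) \<and>
            (\<forall>W\<in>library N F. \<forall>k<K. \<forall>f<F.
               dec d k (enc d W) (cache_content N Z k W) f = W (d k) f)))"

definition optimal_rate :: "'g::{finite,ab_group_add} itself \<Rightarrow> nat \<Rightarrow> nat \<Rightarrow> nat \<Rightarrow> real \<Rightarrow> real" where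
  "optimal_rate G K N F M = Inf {R. achievable G K N F M R}"

end

theory Submission
  imports Defs "HOL-Library.FuncSet"
begin

(* Lower bound by successive decoding.  Fix a demand and restrict the library to a set P
   of subfile positions, all other entries zero.  If the users can be ordered so that
   every position of P in a user's cache lies in a file demanded by an earlier user, the
   users decode one after another, so the message determines the whole restricted
   library and |G|^|P| <= |G|^(RF).  Every user misses D = F(1 - M/N) subfile indices, so
   by averaging some index f0 is missed by at least KD/F users, and at most N of them can
   demand distinct files.  Let one of them demand file 0, which it decodes on its D missed
   indices, and let s - 1 others demand files 1, ..., s - 1, each decoding subfile f0:
   this gives |P| = D + s - 1 >= D + KD/F - 1, where s >= KD/F because N >= KD/F.
   Sending the whole library shows that some rate is achievable, so the infimum is
   bounded below as well. *)

definition supported_on :: "(nat \<times> nat) set \<Rightarrow> (nat \<Rightarrow> nat \<Rightarrow> 'g::zero) set" where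
  "supported_on P = {W. \<forall>n f. (n, f) \<notin> P \<longrightarrow> W n f = 0}"

lemma library_eq_supported_on: "library N F = supported_on ({..<N} \<times> {..<F})"
  by (auto simp: library_def supported_on_def)

lemma supported_on_mono: "P \<subseteq> Q \<Longrightarrow> supported_on P \<subseteq> supported_on Q"
  by (auto simp: supported_on_def)

lemma bij_betw_PiE_supported_on:
  "bij_betw (\<lambda>g n f. if (n, f) \<in> P then g (n, f) else 0) (PiE P (\<lambda>_. UNIV)) (supported_on P)"
proof (rule bij_betwI[where g = "\<lambda>W. restrict (case_prod W) P"])
  show "(\<lambda>W. restrict (case_prod W) P) \<in> supported_on P \<rightarrow> PiE P (\<lambda>_. UNIV)"
    by auto
qed (auto simp: supported_on_def fun_eq_iff PiE_def extensional_def)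

lemma
  fixes P :: "(nat \<times> nat) set"
  assumes "finite P"
  shows finite_supported_on: "finite (supported_on P :: (nat \<Rightarrow> nat \<Rightarrow> 'g::{finite,zero}) set)"
    and card_supported_on: "card (supported_on P :: (nat \<Rightarrow> nat \<Rightarrow> 'g) set) = card (UNIV :: 'g set) ^ card P"
proof -
  have bij: "bij_betw (\<lambda>g n f. if (n, f) \<in> P then g (n, f) else 0)
      (PiE P (\<lambda>_. UNIV :: 'g set)) (supported_on P)"
    by (rule bij_betw_PiE_supported_on)
  show "finite (supported_on P :: (nat \<Rightarrow> nat \<Rightarrow> 'g) set)"
    using bij_betw_finite[OF bij] assms by (simp add: finite_PiE)
  show "card (supported_on P :: (nat \<Rightarrow> nat \<Rightarrow> 'g) set) = card (UNIV :: 'g set) ^ card P"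
    using bij_betw_same_card[OF bij] assms by (simp add: card_PiE)
qed

lemma successive_decoding_inj_on:
  fixes enc :: "(nat \<Rightarrow> nat \<Rightarrow> 'g::{finite,ab_group_add}) \<Rightarrow> 'm"
    and dec :: "nat \<Rightarrow> 'm \<Rightarrow> (nat \<Rightarrow> nat \<Rightarrow> 'g) \<Rightarrow> nat \<Rightarrow> 'g"
    and u :: "nat \<Rightarrow> nat"
  assumes decodes: "\<forall>W\<in>library N F. \<forall>k<K. \<forall>f<F. dec k (enc W) (cache_content N Z k W) f = W (d k) f"
    and users: "\<forall>j<m. u j < K"
    and grid: "P \<subseteq> {..<N} \<times> {..<F}"
    and covered: "fst ` P \<subseteq> d ` u ` {..<m}"
    and cached_earlier: "\<forall>j<m. \<forall>(n, f)\<in>P. f \<in> Z (u j) \<longrightarrow> (\<exists>i<j. n = d (u i))"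
  shows "inj_on enc (supported_on P)"
proof (rule inj_onI)
  fix W W' assume W: "W \<in> supported_on P" and W': "W' \<in> supported_on P"
    and same_message: "enc W = enc W'"
  have lib: "W \<in> library N F" "W' \<in> library N F"
    using W W' supported_on_mono[OF grid] by (auto simp: library_eq_supported_on)
  have outside: "W n f = 0" "W' n f = 0" if "(n, f) \<notin> P" for n f
    using W W' that by (auto simp: supported_on_def)
  have decoded: "W (d (u j)) f = W' (d (u j)) f" if "j < m" "f < F" for j f
    using that
  proof (induction j arbitrary: f rule: less_induct)
    case (less j)
    have "cache_content N Z (u j) W = cache_content N Z (u j) W'"
    proof (intro ext)
      fix n f'
      show "cache_content N Z (u j) W n f' = cache_content N Z (u j) W' n f'"
      proof (cases "(n, f') \<in> P \<and> f' \<in> Z (u j)")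
        case True
        then obtain i where "i < j" "n = d (u i)"
          using cached_earlier less.prems by blast
        moreover have "f' < F" using True grid by auto
        ultimately show ?thesis using less by (simp add: cache_content_def)
      qed (auto simp: cache_content_def outside)
    qed
    then show ?case
      using decodes lib same_message users less.prems by metis
  qed
  show "W = W'"
  proof (intro ext)
    fix n f
    show "W n f = W' n f"
    proof (cases "(n, f) \<in> P")
      case True
      then obtain j where "j < m" "n = d (u j)" using covered by force
      moreover have "f < F" using True grid by auto
      ultimately show ?thesis using decoded by simp
    qed (simp add: outside)
  qed
qed

lemma rate_ge_card_of_successive_decoding:
  fixes enc :: "(nat \<Rightarrow> nat \<Rightarrow> 'g::{finite,ab_group_add}) \<Rightarrow> 'm"
    and dec :: "nat \<Rightarrow> 'm \<Rightarrow> (nat \<Rightarrow> nat \<Rightarrow> 'g) \<Rightarrow> nat \<Rightarrow> 'g"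
    and u :: "nat \<Rightarrow> nat"
  assumes decodes: "\<forall>W\<in>library N F. \<forall>k<K. \<forall>f<F. dec k (enc W) (cache_content N Z k W) f = W (d k) f"
    and users: "\<forall>j<m. u j < K"
    and grid: "P \<subseteq> {..<N} \<times> {..<F}"
    and covered: "fst ` P \<subseteq> d ` u ` {..<m}"
    and cached_earlier: "\<forall>j<m. \<forall>(n, f)\<in>P. f \<in> Z (u j) \<longrightarrow> (\<exists>i<j. n = d (u i))"
    and rate: "real (card (enc ` library N F)) \<le> real (card (UNIV :: 'g set)) powr (R * real F)"
    and nontrivial: "card (UNIV :: 'g set) \<ge> 2"
  shows "real (card P) \<le> R * real F"
proof -
  have "finite P" using grid finite_subset by blast
  have "card (UNIV :: 'g set) ^ card P = card (supported_on P :: (nat \<Rightarrow> nat \<Rightarrow> 'g) set)"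
    by (rule card_supported_on[OF \<open>finite P\<close>, symmetric])
  also have "\<dots> = card (enc ` supported_on P)"
    using successive_decoding_inj_on[OF decodes users grid covered cached_earlier]
    by (simp add: card_image)
  also have "\<dots> \<le> card (enc ` library N F)"
    using supported_on_mono[OF grid] finite_supported_on[of "{..<N} \<times> {..<F}"]
    by (intro card_mono image_mono) (auto simp: library_eq_supported_on)
  finally have "real (card (UNIV :: 'g set)) powr real (card P)
      \<le> real (card (UNIV :: 'g set)) powr (R * real F)"
    using rate nontrivial by (simp add: powr_realpow flip: of_nat_power)
  then show ?thesis using nontrivial by simp
qed

lemma rate_ge_uncached_plus_users:
  fixes enc :: "(nat \<Rightarrow> nat) \<Rightarrow> (nat \<Rightarrow> nat \<Rightarrow> 'g::{finite,ab_group_add}) \<Rightarrow> 'm"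
    and dec :: "(nat \<Rightarrow> nat) \<Rightarrow> nat \<Rightarrow> 'm \<Rightarrow> (nat \<Rightarrow> nat \<Rightarrow> 'g) \<Rightarrow> nat \<Rightarrow> 'g"
  assumes delivery: "\<And>d. \<forall>k<K. d k < N \<Longrightarrow>
      real (card (enc d ` library N F)) \<le> real (card (UNIV :: 'g set)) powr (R * real F) \<and>
      (\<forall>W\<in>library N F. \<forall>k<K. \<forall>f<F. dec d k (enc d W) (cache_content N Z k W) f = W (d k) f)"
    and uncached: "\<forall>k<K. card ({..<F} - Z k) = D"
    and "f0 < F" and "1 \<le> s" and "s \<le> N" and s_le_missing: "s \<le> card {k\<in>{..<K}. f0 \<notin> Z k}"
    and nontrivial: "card (UNIV :: 'g set) \<ge> 2"
  shows "real D + real s - 1 \<le> R * real F"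
proof -
  obtain h where h: "h ` {..<s} \<subseteq> {k\<in>{..<K}. f0 \<notin> Z k}" "inj_on h {..<s}"
    using card_le_inj[of "{..<s}" "{k\<in>{..<K}. f0 \<notin> Z k}"] s_le_missing by auto
  define d where "d k = (if k \<in> h ` {..<s} then inv_into {..<s} h k else 0)" for k
  have d_h: "d (h i) = i" if "i < s" for i
    using that h(2) by (simp add: d_def)
  have "\<forall>k<K. d k < N"
    using h(2) \<open>s \<le> N\<close> \<open>1 \<le> s\<close> by (auto simp: d_def)
  note delivery_d = delivery[OF this]
  define P where "P = {0} \<times> ({..<F} - Z (h 0)) \<union> {1..<s} \<times> {f0}"
  have "real (card P) \<le> R * real F"
  proof (rule rate_ge_card_of_successive_decoding
      [where enc = "enc d" and dec = "dec d" and u = h and m = s and K = K and d = d])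
    show "\<forall>j<s. h j < K" using h(1) by auto
    show "P \<subseteq> {..<N} \<times> {..<F}"
      using \<open>f0 < F\<close> \<open>1 \<le> s\<close> \<open>s \<le> N\<close> by (auto simp: P_def)
    show "fst ` P \<subseteq> d ` h ` {..<s}"
      using \<open>1 \<le> s\<close> d_h by (force simp: P_def image_image)
    show "\<forall>j<s. \<forall>(n, f)\<in>P. f \<in> Z (h j) \<longrightarrow> (\<exists>i<j. n = d (h i))"
      using h(1) d_h by (fastforce simp: P_def)
  qed (use delivery_d nontrivial in auto)
  moreover have "card P = D + (s - 1)"
    using uncached h(1)[THEN subsetD, of "h 0"] \<open>1 \<le> s\<close> unfolding P_def
    by (subst card_Un_disjoint) (auto simp: card_cartesian_product)
  ultimately show ?thesis using \<open>1 \<le> s\<close> by (simp add: of_nat_diff)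
qed

lemma exists_ge_average:
  fixes g :: "'a \<Rightarrow> nat"
  assumes "finite A" and "A \<noteq> {}"
  shows "\<exists>x\<in>A. sum g A \<le> g x * card A"
proof (rule ccontr)
  assume "\<not> ?thesis"
  then have "(\<Sum>x\<in>A. g x * card A) < of_nat (card A) * sum g A"
    using assms by (intro sum_bounded_above_strict) (auto simp: not_le card_gt_0_iff)
  then show False by (simp add: sum_distrib_left mult.commute)
qed

lemma sum_card_not_cached:
  fixes K F D :: nat and Z :: "nat \<Rightarrow> nat set"
  assumes "\<forall>k<K. card ({..<F} - Z k) = D"
  shows "(\<Sum>f<F. card {k\<in>{..<K}. f \<notin> Z k}) = K * D"
proof -
  have "(\<Sum>f<F. card {k\<in>{..<K}. f \<notin> Z k}) = (\<Sum>f<F. \<Sum>k<K. of_bool (f \<notin> Z k))"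
    by (simp add: Int_def)
  also have "\<dots> = (\<Sum>k<K. \<Sum>f<F. of_bool (f \<notin> Z k))"
    by (rule sum.swap)
  also have "\<dots> = (\<Sum>k<K. card ({..<F} - Z k))"
  proof (intro sum.cong refl)
    fix k
    show "(\<Sum>f<F. of_bool (f \<notin> Z k)) = card ({..<F} - Z k)"
      using sum_of_bool_eq[of "{..<F}" "\<lambda>f. f \<notin> Z k"] by (simp add: Diff_eq Collect_neg_eq)
  qed
  also have "\<dots> = K * D"
    using assms by simp
  finally show ?thesis .
qed

lemma exists_subfile_often_uncached:
  fixes K F D :: nat and Z :: "nat \<Rightarrow> nat set"
  assumes "F \<ge> 1" and "\<forall>k<K. card ({..<F} - Z k) = D"
  shows "\<exists>f<F. K * D \<le> card {k\<in>{..<K}. f \<notin> Z k} * F"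
  using exists_ge_average[of "{..<F}" "\<lambda>f. card {k\<in>{..<K}. f \<notin> Z k}"]
    sum_card_not_cached[OF assms(2)] assms(1)
  by (auto simp: lessThan_empty_iff)

lemma symmetric_caching_uncached:
  assumes "symmetric_caching K N F M Z" and "real t = real F * M / real N"
    and "K \<ge> 1" and "F \<ge> 1" and "N \<ge> 1"
  shows "\<forall>k<K. card ({..<F} - Z k) = F - t" and "1 - M / real N = real (F - t) / real F"
proof -
  have cache_size: "card (Z k) = t" "Z k \<subseteq> {..<F}" if "k < K" for k
    using assms(1,2) that unfolding symmetric_caching_def by auto
  then show "\<forall>k<K. card ({..<F} - Z k) = F - t"
    by (simp add: card_Diff_subset finite_subset[of _ "{..<F}"])
  have "t \<le> F"
    using cache_size[of 0] \<open>K \<ge> 1\<close> card_mono[of "{..<F}" "Z 0"] by auto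
  then show "1 - M / real N = real (F - t) / real F"
    using assms(2,4,5) by (simp add: field_simps of_nat_diff)
qed

lemma achievable_rate_lower_bound:
  fixes K N F :: nat and M R :: real
  assumes "K \<ge> 1" and "F \<ge> 1" and "N \<ge> 1"
    and "\<exists>t::nat. real t = real F * M / real N"
    and N_ge: "real N \<ge> real K * (1 - M / real N)"
    and nontrivial: "card (UNIV :: 'g::{finite,ab_group_add} set) \<ge> 2"
    and "achievable TYPE('g) K N F M R"
  shows "(real K + real F) * (1 - M / real N) - 1 \<le> R * real F"
proof -
  obtain Z and enc :: "(nat \<Rightarrow> nat) \<Rightarrow> (nat \<Rightarrow> nat \<Rightarrow> 'g) \<Rightarrow> nat"
    and dec :: "(nat \<Rightarrow> nat) \<Rightarrow> nat \<Rightarrow> nat \<Rightarrow> (nat \<Rightarrow> nat \<Rightarrow> 'g) \<Rightarrow> nat \<Rightarrow> 'g"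
    where caching: "symmetric_caching K N F M Z"
    and delivery: "\<And>d. \<forall>k<K. d k < N \<Longrightarrow>
      real (card (enc d ` library N F)) \<le> real (card (UNIV :: 'g set)) powr (R * real F) \<and>
      (\<forall>W\<in>library N F. \<forall>k<K. \<forall>f<F. dec d k (enc d W) (cache_content N Z k W) f = W (d k) f)"
    using \<open>achievable TYPE('g) K N F M R\<close> unfolding achievable_def by blast
  obtain t :: nat where "real t = real F * M / real N"
    using \<open>\<exists>t::nat. real t = real F * M / real N\<close> by blast
  define D where "D = F - t"
  have uncached: "\<forall>k<K. card ({..<F} - Z k) = D" and D_over_F: "1 - M / real N = real D / real F"
    using symmetric_caching_uncached[OF caching \<open>real t = _\<close> assms(1-3)] unfolding D_def by auto
  show ?thesis
  proof (cases "D = 0")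
    case True
    have "real (card ({} :: (nat \<times> nat) set)) \<le> R * real F"
      by (rule rate_ge_card_of_successive_decoding[where m = 0 and d = "\<lambda>_. 0" and enc = "enc (\<lambda>_. 0)"
          and dec = "dec (\<lambda>_. 0)" and N = N and K = K and Z = Z])
        (use delivery[of "\<lambda>_. 0"] \<open>N \<ge> 1\<close> nontrivial in auto)
    then show ?thesis using D_over_F True by simp
  next
    case False
    obtain f0 where "f0 < F" and f0: "K * D \<le> card {k\<in>{..<K}. f0 \<notin> Z k} * F"
      using exists_subfile_often_uncached[OF \<open>F \<ge> 1\<close> uncached] by blast
    define s where "s = min (card {k\<in>{..<K}. f0 \<notin> Z k}) N"
    have "real K * real D \<le> real N * real F"
      using N_ge D_over_F \<open>F \<ge> 1\<close> by (simp add: field_simps)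
    then have "K * D \<le> N * F" by (simp flip: of_nat_mult)
    then have KD_le: "K * D \<le> s * F" using f0 by (simp add: s_def min_def)
    then have "1 \<le> s" using False \<open>K \<ge> 1\<close> by (cases s) auto
    have "(real K + real F) * (1 - M / real N) - 1 = real K * real D / real F + real D - 1"
      unfolding D_over_F using \<open>F \<ge> 1\<close> by (simp add: field_simps)
    also have "\<dots> \<le> real s + real D - 1"
      using KD_le \<open>F \<ge> 1\<close> by (simp add: field_simps flip: of_nat_mult)
    also have "\<dots> \<le> R * real F"
      using rate_ge_uncached_plus_users[OF delivery uncached \<open>f0 < F\<close> \<open>1 \<le> s\<close> _ _ nontrivial]
      by (simp add: s_def)
    finally show ?thesis .
  qed
qed

lemma achievable_by_sending_library:
  fixes K N F :: nat and M :: real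
  assumes "0 \<le> M" and "M \<le> real N" and "\<exists>t::nat. real t = real F * M / real N"
  shows "achievable TYPE('g::{finite,ab_group_add}) K N F M (real N)"
proof -
  obtain t :: nat where t: "real t = real F * M / real N"
    using assms(3) by blast
  have "real F * M / real N \<le> real F"
    using assms(1,2) by (cases "N = 0") (auto simp: divide_le_eq mult_left_mono)
  then have "symmetric_caching K N F M (\<lambda>_. {..<t})"
    using t by (simp add: symmetric_caching_def)
  define L where "L = (library N F :: (nat \<Rightarrow> nat \<Rightarrow> 'g) set)"
  have "finite L" "card L = card (UNIV :: 'g set) ^ (N * F)"
    using finite_supported_on[where 'g = 'g] card_supported_on[where 'g = 'g]
    by (auto simp: L_def library_eq_supported_on card_cartesian_product)
  then obtain enc :: "(nat \<Rightarrow> nat \<Rightarrow> 'g) \<Rightarrow> nat" where "inj_on enc L"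
    using finite_imp_inj_to_nat_seg by blast
  have "real (card (enc ` L)) \<le> real (card (UNIV :: 'g set)) powr (real N * real F)"
    using \<open>inj_on enc L\<close> \<open>card L = _\<close>
    by (simp add: card_image powr_realpow finite_UNIV_card_ge_0 flip: of_nat_mult)
  moreover have "inv_into L enc (enc W) = W" if "W \<in> L" for W
    using \<open>inj_on enc L\<close> that by simp
  ultimately show ?thesis
    unfolding achievable_def
    using \<open>symmetric_caching K N F M (\<lambda>_. {..<t})\<close>
    by (intro exI[of _ "\<lambda>_. {..<t}"] exI[of _ "\<lambda>_. enc"]
        exI[of _ "\<lambda>d k x _ f. inv_into L enc x (d k) f"]) (auto simp: L_def)
qed

theorem corollary3:
  fixes K N F :: nat and M :: real
  assumes "K \<ge> 1" and "F \<ge> 1" and "N \<ge> 1"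
    and "0 \<le> M" and "M \<le> real N"
    and "\<exists>t::nat. real t = real F * M / real N"
    and "real N \<ge> real K * (1 - M / real N)"
    and "card (UNIV :: 'g::{finite,ab_group_add} set) \<ge> 2"
  shows "optimal_rate TYPE('g) K N F M * real F \<ge> (real K + real F) * (1 - M / real N) - 1"
proof -
  let ?bound = "((real K + real F) * (1 - M / real N) - 1) / real F"
  have "?bound \<le> Inf {R. achievable TYPE('g) K N F M R}"
  proof (rule cInf_greatest)
    show "{R. achievable TYPE('g) K N F M R} \<noteq> {}"
      using achievable_by_sending_library[OF assms(4-6)] by blast
    show "?bound \<le> R" if "R \<in> {R. achievable TYPE('g) K N F M R}" for R
      using achievable_rate_lower_bound[OF assms(1-3,6-8)] that \<open>F \<ge> 1\<close>
      by (simp add: divide_le_eq)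
  qed
  then show ?thesis
    using \<open>F \<ge> 1\<close> by (simp add: optimal_rate_def divide_le_eq)
qed

end
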